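(* Let $A\in\mathbb{R}^{n\times n}$ with spectral radius $\rho(A)<1$, let $C\in\mathbb{R}^{m\times n}$, and let $Q\in\mathbb{R}^{n\times n}$, $R\in\mathbb{R}^{m\times m}$ be symmetric positive definite, with $(A,C)$ observable and $(A,Q^{1/2})$ controllable. Let $\bar P$ be the unique stabilizing positive definite solution of the discrete-time algebraic Riccati equation $$\bar P = A\bar PA^{\intercal}+Q-(A\bar PA^{\intercal}+Q)C^{\intercal}\big(C(A\bar PA^{\intercal}+Q)C^{\intercal}+R\big)^{-1}C(A\bar PA^{\intercal}+Q),$$ let $P^{OP}=L(A,Q)$ and $P_n=P^{OP}+\bar P$. Let $\gamma^e\in(0,1)$ and $\mu\in(0,1)$. Let $(\lambda^e_k)_{k\ge1}$ be i.i.d. $\{0,1\}$-valued random variables with $\mathbb{P}[\lambda^e_k=0]=\gamma^e$, and let $(u_k)_{k\ge1}$ be i.i.d. $\{0,1\}$-valued random variables with $\mathbb{P}[u_k=0]=\mu$, the two sequences being independent of each other. Let $P^e_0$ be a fixed symmetric positive semidefinite matrix and define recursively, for $k\ge1$, $$P^e_k=\begin{cases}\bar P, & \text{if } (\lambda^e_k,u_k)=(1,1),\\ P_n, & \text{if } (\lambda^e_k,u_k)=(1,0),\\ AP^e_{k-1}A^{\intercal}+Q, & \text{if } \lambda^e_k=0.\end{cases}$$ Then $$\lim_{k\to\infty}\mathbb{E}[P^e_k]=(1-\gamma^e)(1-\mu)\,W^e+\gamma^e S^e+(1-\gamma^e)\mu\,H^e,$$ where $W^e=L(\sqrt{\gamma^e}A,\bar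 P)$, $S^e=L(\sqrt{\gamma^e}A,Q)$ and $H^e=L(\sqrt{\gamma^e}A,P_n)$.
   Context: For a square matrix $T$ with $\rho(T)<1$ and a symmetric matrix $U$, $L(T,U)$ denotes the unique solution $V$ of the discrete-time Lyapunov equation $V=TVT^{\intercal}+U$, equivalently $L(T,U)=\sum_{j=0}^{\infty}T^jU(T^{\intercal})^j$. $P^{OP}=L(A,Q)$ is the open-loop (prediction-only) error covariance of the system $x_{k+1}=Ax_k+w_k$, $\mathrm{Cov}(w_k)=Q$. Here $P^e_k$ models the error covariance of an eavesdropper that receives packets when $\lambda^e_k=1$; a received packet is either the sensor's Kalman estimate (error covariance $\bar P$, when $u_k=1$) or independent noise with covariance $\bar P$ that the eavesdropper mistakes for the estimate (error covariance $P_n$, when $u_k=0$). *)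

theory Defs
  imports "HOL-Analysis.Analysis" "HOL-Probability.Probability"
begin

text \<open>Matrix power with respect to matrix multiplication (the operator ^ on vec types is pointwise).\<close>
primrec matpow :: "real^'n^'n \<Rightarrow> nat \<Rightarrow> real^'n^'n" where
  "matpow A 0 = mat 1"
| "matpow A (Suc k) = A ** matpow A k"

definition cmat :: "real^'n^'m \<Rightarrow> complex^'n^'m" where
  "cmat A = (\<chi> i j. complex_of_real (A $ i $ j))"

definition spectral_radius :: "real^'n^'n \<Rightarrow> real" where
  "spectral_radius A = Max {cmod z | z. \<exists>v::complex^'n. v \<noteq> 0 \<and> cmat A *v v = z *s v}"

definition sym_mat :: "real^'n^'n \<Rightarrow> bool" where
  "sym_mat M \<longleftrightarrow> transpose M = M"

definition pos_def :: "real^'n^'n \<Rightarrow> bool" where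
  "pos_def M \<longleftrightarrow> sym_mat M \<and> (\<forall>x. x \<noteq> 0 \<longrightarrow> x \<bullet> (M *v x) > 0)"

definition pos_semidef :: "real^'n^'n \<Rightarrow> bool" where
  "pos_semidef M \<longleftrightarrow> sym_mat M \<and> (\<forall>x. x \<bullet> (M *v x) \<ge> 0)"

text \<open>Observability of (A,C): the observability matrix [C; CA; ...; CA^(n-1)] has trivial kernel
  (i.e. full column rank n).\<close>
definition observable :: "real^'n^'n \<Rightarrow> real^'n^'m \<Rightarrow> bool" where
  "observable A C \<longleftrightarrow>
     (\<forall>v::real^'n. (\<forall>k<CARD('n). (C ** matpow A k) *v v = 0) \<longrightarrow> v = 0)"

text \<open>Controllability of (A,B): the controllability matrix [B, AB, ..., A^(n-1)B] has full row rank n.\<close>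
definition controllable :: "real^'n^'n \<Rightarrow> real^'p^'n \<Rightarrow> bool" where
  "controllable A B \<longleftrightarrow>
     (\<forall>v::real^'n. (\<forall>k<CARD('n). v v* (matpow A k ** B) = 0) \<longrightarrow> v = 0)"

definition mat_sqrt :: "real^'n^'n \<Rightarrow> real^'n^'n" where
  "mat_sqrt Q = (THE S. pos_semidef S \<and> S ** S = Q)"

text \<open>Solution of the discrete Lyapunov equation V = T V T^T + U, as the series sum_j T^j U (T^T)^j.\<close>
definition lyap :: "real^'n^'n \<Rightarrow> real^'n^'n \<Rightarrow> real^'n^'n" where
  "lyap T U = (\<Sum>j. matpow T j ** U ** transpose (matpow T j))"

definition riccati :: "real^'n^'n \<Rightarrow> real^'n^'m \<Rightarrow> real^'n^'n \<Rightarrow> real^'m^'m \<Rightarrow> real^'n^'n \<Rightarrow> real^'n^'n" where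
  "riccati A C Q R P =
     (let M = A ** P ** transpose A + Q
      in M - M ** transpose C ** matrix_inv (C ** M ** transpose C + R) ** C ** M)"

definition kgain :: "real^'n^'n \<Rightarrow> real^'n^'m \<Rightarrow> real^'n^'n \<Rightarrow> real^'m^'m \<Rightarrow> real^'n^'n \<Rightarrow> real^'m^'n" where
  "kgain A C Q R P =
     (let M = A ** P ** transpose A + Q in M ** transpose C ** matrix_inv (C ** M ** transpose C + R))"

text \<open>Eavesdropper error covariance recursion, driven by sample paths lam, u of the
  {0,1}-valued processes (index k \<ge> 1).\<close>
primrec eav_cov :: "real^'n^'n \<Rightarrow> real^'n^'n \<Rightarrow> real^'n^'n \<Rightarrow> real^'n^'n \<Rightarrow> real^'n^'n
    \<Rightarrow> (nat \<Rightarrow> nat) \<Rightarrow> (nat \<Rightarrow> nat) \<Rightarrow> nat \<Rightarrow> real^'n^'n" where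
  "eav_cov A Q Pbar Pn P0 lam u 0 = P0"
| "eav_cov A Q Pbar Pn P0 lam u (Suc k) =
     (if lam (Suc k) = 1 \<and> u (Suc k) = 1 then Pbar
      else if lam (Suc k) = 1 \<and> u (Suc k) = 0 then Pn
      else A ** eav_cov A Q Pbar Pn P0 lam u k ** transpose A + Q)"

end

theory Submission
  imports Defs "Jordan_Normal_Form.Spectral_Radius"
begin

(* Taking expectations in the recursion for P_k, and using that the packet pair
   (lam (k+1), u (k+1)) is independent of the first k packets, which determine P_k, gives the
   affine recursion
     E P_(k+1) = c + B (E P_k) B^T,   B = sqrt \<gamma> A,   c = (1-\<gamma>)(1-\<mu>) Pbar + \<gamma> Q + (1-\<gamma>)\<mu> P_n.
   Unrolled, E P_k = B^k P_0 (B^T)^k + (\<Sum>j<k. B^j c (B^T)^j). Since the spectral radius of A is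
   below one, the powers of A are bounded; with \<gamma> < 1 the first term therefore vanishes and the
   sum converges to L(B, c) = lyap B c, which is linear in c. *)

hide_const (open) Matrix.mat Matrix.vec Spectral_Radius.spectral_radius
no_notation Matrix.vec_index (infixl \<open>$\<close> 100)
no_notation Matrix.scalar_prod (infix \<open>\<bullet>\<close> 70)

section \<open>Bounded powers of a matrix with spectral radius below one\<close>

abbreviation cart_index :: "nat \<Rightarrow> 'n::finite" where
  "cart_index \<equiv> from_nat_into UNIV"

lemma bij_cart_index: "bij_betw (cart_index :: nat \<Rightarrow> 'n::finite) {..<CARD('n)} UNIV"
  using bij_betw_from_nat_into_finite[of "UNIV :: 'n set"] by simp

lemma cart_index_eq_iff:
  "i < CARD('n) \<Longrightarrow> j < CARD('n) \<Longrightarrow> (cart_index i :: 'n::finite) = cart_index j \<longleftrightarrow> i = j"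
  using bij_cart_index[where 'n = 'n] by (auto simp: bij_betw_def inj_on_def)

lemma cart_index_surj: obtains i where "i < CARD('n)" "(j :: 'n::finite) = cart_index i"
  using bij_cart_index[where 'n = 'n] by (force simp: bij_betw_def)

definition mat_of_cart :: "'a^'n^'n \<Rightarrow> 'a mat" where
  "mat_of_cart X = Matrix.mat CARD('n) CARD('n) (\<lambda>(i, j). X $ cart_index i $ cart_index j)"

definition vec_of_cart :: "'a^'n \<Rightarrow> 'a Matrix.vec" where
  "vec_of_cart x = Matrix.vec CARD('n) (\<lambda>i. x $ cart_index i)"

lemma dim_mat_of_cart [simp]:
  "dim_row (mat_of_cart (X :: 'a^'n^'n)) = CARD('n)" "dim_col (mat_of_cart X) = CARD('n)"
  by (simp_all add: mat_of_cart_def)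

lemma dim_vec_of_cart [simp]: "dim_vec (vec_of_cart (x :: 'a^'n)) = CARD('n)"
  by (simp add: vec_of_cart_def)

lemma mat_of_cart_carrier: "mat_of_cart (X :: 'a^'n^'n) \<in> carrier_mat CARD('n) CARD('n)"
  by (simp add: mat_of_cart_def)

lemma sum_UNIV_cart_index:
  "(\<Sum>l\<in>UNIV. f (l :: 'n::finite)) = (\<Sum>l<CARD('n). f (cart_index l))"
  using sum.reindex_bij_betw[OF bij_cart_index, of f] by simp

lemma mat_of_cart_mult:
  "mat_of_cart (X ** Y) = mat_of_cart X * mat_of_cart (Y :: 'a::semiring_1^'n^'n)"
  by (rule eq_matI)
    (simp_all add: mat_of_cart_def scalar_prod_def matrix_matrix_mult_def atLeast0LessThan sum_UNIV_cart_index)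

lemma mat_of_cart_one: "mat_of_cart (mat 1 :: 'a::semiring_1^'n^'n) = 1\<^sub>m CARD('n)"
  by (rule eq_matI) (simp_all add: mat_of_cart_def Finite_Cartesian_Product.mat_def cart_index_eq_iff)

lemma mat_of_cart_mult_vec:
  "mat_of_cart X *\<^sub>v vec_of_cart x = vec_of_cart (X *v (x :: 'a::semiring_1^'n))"
  by (rule eq_vecI)
    (simp_all add: mat_of_cart_def vec_of_cart_def mult_mat_vec_def scalar_prod_def
      matrix_vector_mult_def atLeast0LessThan sum_UNIV_cart_index)

lemma vec_of_cart_smult: "vec_of_cart (c *s x) = c \<cdot>\<^sub>v vec_of_cart x"
  by (rule eq_vecI) (simp_all add: vec_of_cart_def)

lemma vec_of_cart_inj: "vec_of_cart x = vec_of_cart y \<Longrightarrow> x = (y :: 'a^'n)"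
  by (auto simp: vec_of_cart_def vec_eq_iff Finite_Cartesian_Product.vec_eq_iff)
    (metis cart_index_surj)

lemma vec_of_cart_eq_0_iff: "vec_of_cart x = 0\<^sub>v CARD('n) \<longleftrightarrow> (x :: 'a::zero^'n) = 0"
  by (auto simp: vec_of_cart_def vec_eq_iff Finite_Cartesian_Product.vec_eq_iff)
    (metis cart_index_surj)

lemma vec_of_cart_surj:
  assumes "v \<in> carrier_vec CARD('n::finite)"
  shows "\<exists>x :: 'a^'n. vec_of_cart x = v"
proof
  show "vec_of_cart (\<chi> j. vec_index v (the_inv_into {..<CARD('n)} cart_index j) :: 'a^'n) = v"
    using assms bij_cart_index[where 'n = 'n]
    by (intro eq_vecI) (auto simp: vec_of_cart_def bij_betw_def the_inv_into_f_f)
qed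

lemma matpow_Suc_right: "matpow A (Suc k) = matpow A k ** A"
  by (induction k) (simp_all add: matrix_mul_assoc)

lemma cmat_mult: "cmat (X ** Y) = cmat X ** cmat Y"
  by (simp add: cmat_def matrix_matrix_mult_def Finite_Cartesian_Product.vec_eq_iff)

lemma cmat_one: "cmat (mat 1) = mat 1"
  by (simp add: cmat_def Finite_Cartesian_Product.mat_def Finite_Cartesian_Product.vec_eq_iff)

lemma mat_of_cart_cmat_matpow: "mat_of_cart (cmat (matpow A k)) = mat_of_cart (cmat A) ^\<^sub>m k"
  by (induction k) (simp_all add: cmat_one mat_of_cart_one matpow_Suc_right cmat_mult mat_of_cart_mult
      del: matpow.simps(2))

lemma spectrum_mat_of_cart:
  "spectrum (mat_of_cart X) = {z. \<exists>v::'a::field^'n. v \<noteq> 0 \<and> X *v v = z *s v}"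
proof safe
  fix z assume "z \<in> spectrum (mat_of_cart X)"
  then obtain w where w: "w \<in> carrier_vec CARD('n)" "w \<noteq> 0\<^sub>v CARD('n)" "mat_of_cart X *\<^sub>v w = z \<cdot>\<^sub>v w"
    by (auto simp: spectrum_def eigenvalue_def eigenvector_def mat_of_cart_def)
  obtain x :: "'a^'n" where x: "vec_of_cart x = w" using vec_of_cart_surj[OF w(1)] by blast
  show "\<exists>v. v \<noteq> 0 \<and> X *v v = z *s v"
  proof (intro exI conjI)
    show "x \<noteq> 0" using w(2) x vec_of_cart_eq_0_iff by blast
    show "X *v x = z *s x"
      using w(3) x mat_of_cart_mult_vec vec_of_cart_smult vec_of_cart_inj by metis
  qed
next
  fix z and v :: "'a^'n" assume "v \<noteq> 0" "X *v v = z *s v"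
  then have "eigenvector (mat_of_cart X) (vec_of_cart v) z"
    by (simp add: eigenvector_def carrier_vecI mat_of_cart_mult_vec vec_of_cart_smult
        vec_of_cart_eq_0_iff)
  then show "z \<in> spectrum (mat_of_cart X)"
    by (auto simp: spectrum_def eigenvalue_def)
qed

lemma spectral_radius_mat_of_cart:
  "Spectral_Radius.spectral_radius (mat_of_cart (cmat A)) = spectral_radius A"
  unfolding Spectral_Radius.spectral_radius_def Defs.spectral_radius_def spectrum_mat_of_cart
  by (simp add: image_Collect)

lemma norm_matrix_le_sum_abs: "norm (X :: real^'n^'m) \<le> (\<Sum>i\<in>UNIV. \<Sum>j\<in>UNIV. \<bar>X $ i $ j\<bar>)"
proof -
  have "norm X \<le> (\<Sum>i\<in>UNIV. norm (X $ i))"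
    unfolding norm_vec_def by (rule L2_set_le_sum) simp
  also have "\<dots> \<le> (\<Sum>i\<in>UNIV. \<Sum>j\<in>UNIV. \<bar>X $ i $ j\<bar>)"
    by (intro sum_mono norm_le_l1_cart)
  finally show ?thesis .
qed

lemma bounded_matpow:
  fixes A :: "real^'n^'n"
  assumes "spectral_radius A < 1"
  obtains b where "\<And>k. norm (matpow A k) \<le> b"
proof -
  have "Spectral_Radius.spectral_radius (mat_of_cart (cmat A)) < 1"
    using assms by (simp add: spectral_radius_mat_of_cart)
  then obtain c where c: "\<And>k. norm_bound (mat_of_cart (cmat A) ^\<^sub>m k) c"
    using spectral_radius_jnf_norm_bound_less_1_upper_triangular[OF mat_of_cart_carrier] by blast
  have entry: "\<bar>matpow A k $ i $ j\<bar> \<le> c" for k i j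
  proof -
    obtain i' j' where "i' < CARD('n)" "i = cart_index i'" "j' < CARD('n)" "j = cart_index j'"
      using cart_index_surj[of i] cart_index_surj[of j] by metis
    then show ?thesis
      using c[of k] unfolding norm_bound_def mat_of_cart_cmat_matpow[symmetric]
      by (simp add: mat_of_cart_def cmat_def)
  qed
  have "norm (matpow A k) \<le> (\<Sum>i\<in>(UNIV :: 'n set). \<Sum>j\<in>(UNIV :: 'n set). c)" for k
    using norm_matrix_le_sum_abs[of "matpow A k"] by (rule order_trans) (intro sum_mono entry)
  then show ?thesis by (rule that)
qed

section \<open>The Lyapunov series\<close>

lemma bounded_bilinear_matrix_matrix_mult:
  "bounded_bilinear ((**) :: real^'n^'m \<Rightarrow> real^'k^'n \<Rightarrow> real^'k^'m)"
  unfolding bilinear_conv_bounded_bilinear[symmetric] bilinear_def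
  by (auto intro!: linearI simp: Finite_Cartesian_Product.vec_eq_iff matrix_matrix_mult_def
      sum.distrib sum_distrib_left algebra_simps)

lemma bounded_linear_transpose: "bounded_linear (transpose :: real^'n^'m \<Rightarrow> real^'m^'n)"
  by (auto intro!: bounded_linearI' simp: transpose_def Finite_Cartesian_Product.vec_eq_iff)

abbreviation sandwich :: "real^'n^'m \<Rightarrow> real^'n^'n \<Rightarrow> real^'m^'m" where
  "sandwich B X \<equiv> B ** X ** transpose B"

lemma bounded_linear_sandwich: "bounded_linear (sandwich B)"
  using bounded_linear_compose[OF bounded_bilinear.bounded_linear_left[OF bounded_bilinear_matrix_matrix_mult]
      bounded_bilinear.bounded_linear_right[OF bounded_bilinear_matrix_matrix_mult]] .

lemma norm_sandwich_le:
  obtains K where "K > 0" "\<And>B X. norm (sandwich (B :: real^'n^'m) X) \<le> K * (norm B)\<^sup>2 * norm X"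
proof -
  obtain K1 where "K1 > 0" and K1: "\<And>(X :: real^'n^'m) (Y :: real^'n^'n). norm (X ** Y) \<le> norm X * norm Y * K1"
    using bounded_bilinear.pos_bounded[OF bounded_bilinear_matrix_matrix_mult] by blast
  obtain K2 where "K2 > 0" and K2: "\<And>(X :: real^'n^'m) (Y :: real^'m^'n). norm (X ** Y) \<le> norm X * norm Y * K2"
    using bounded_bilinear.pos_bounded[OF bounded_bilinear_matrix_matrix_mult] by blast
  obtain K3 where "K3 > 0" and K3: "\<And>X :: real^'n^'m. norm (transpose X) \<le> norm X * K3"
    using bounded_linear.pos_bounded[OF bounded_linear_transpose] by blast
  have bound: "norm (sandwich B X) \<le> (K1 * K2 * K3) * (norm B)\<^sup>2 * norm X"
    for B :: "real^'n^'m" and X :: "real^'n^'n"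
  proof -
    have "norm (sandwich B X) \<le> norm (B ** X) * norm (transpose B) * K2" by (rule K2)
    also have "\<dots> \<le> (norm B * norm X * K1) * (norm B * K3) * K2"
      using \<open>K2 > 0\<close> by (intro mult_right_mono mult_mono K1 K3) (auto intro: order_trans[OF norm_ge_zero K1])
    finally show ?thesis by (simp add: power2_eq_square mult_ac)
  qed
  have "K1 * K2 * K3 > 0"
    using \<open>K1 > 0\<close> \<open>K2 > 0\<close> \<open>K3 > 0\<close> by simp
  then show ?thesis using bound by (rule that)
qed

lemma sandwich_matpow_Suc: "sandwich (matpow B (Suc k)) X = sandwich B (sandwich (matpow B k) X)"
  by (simp add: matrix_transpose_mul matrix_mul_assoc)

lemma sandwich_scaleR: "sandwich (c *\<^sub>R B) X = (c * c) *\<^sub>R sandwich B X"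
  by (simp add: transpose_scalar matrix_scalar_ac scalar_matrix_assoc[symmetric])

lemma matpow_scaleR: "matpow (c *\<^sub>R A) k = c ^ k *\<^sub>R matpow A k"
  by (induction k) (simp_all add: matrix_scalar_ac scalar_matrix_assoc[symmetric])

lemma summable_lyap_series:
  fixes A :: "real^'n^'n"
  assumes bound: "\<And>k. norm (matpow A k) \<le> b" and c: "\<bar>c\<bar> < 1"
  shows "summable (\<lambda>j. sandwich (matpow (c *\<^sub>R A) j) U)"
proof -
  obtain K where "K > 0" and K: "\<And>B X. norm (sandwich (B :: real^'n^'n) X) \<le> K * (norm B)\<^sup>2 * norm X"
    using norm_sandwich_le by blast
  have term_bound: "norm (sandwich (matpow (c *\<^sub>R A) j) U) \<le> (K * b\<^sup>2 * norm U) * (c\<^sup>2) ^ j" for j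
  proof -
    have "sandwich (matpow (c *\<^sub>R A) j) U = (c ^ j * c ^ j) *\<^sub>R sandwich (matpow A j) U"
      by (simp only: matpow_scaleR sandwich_scaleR)
    also have "c ^ j * c ^ j = (c\<^sup>2) ^ j"
      by (simp add: power2_eq_square power_mult_distrib)
    finally have "norm (sandwich (matpow (c *\<^sub>R A) j) U) = (c\<^sup>2) ^ j * norm (sandwich (matpow A j) U)"
      by simp
    also have "\<dots> \<le> (c\<^sup>2) ^ j * (K * b\<^sup>2 * norm U)"
    proof (rule mult_left_mono)
      have "(norm (matpow A j))\<^sup>2 \<le> b\<^sup>2"
        using bound[of j] by (simp add: power_mono)
      then show "norm (sandwich (matpow A j) U) \<le> K * b\<^sup>2 * norm U"
        using K[of "matpow A j" U] \<open>K > 0\<close> by (simp add: mult_right_mono order_trans)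
    qed simp
    finally show ?thesis by (simp add: mult_ac)
  qed
  have "summable (\<lambda>j. (K * b\<^sup>2 * norm U) * (c\<^sup>2) ^ j)"
    using c by (intro summable_mult summable_geometric) (simp add: abs_square_less_1)
  then show ?thesis using term_bound by (rule summable_comparison_test')
qed

lemma linear_lyap:
  assumes "\<And>U. summable (\<lambda>j. sandwich (matpow B j) U)"
  shows "linear (lyap B)"
proof (rule linearI)
  have sandwich_linear: "linear (sandwich C)" for C :: "real^'n^'n"
    using bounded_linear_sandwich bounded_linear.linear by blast
  show "lyap B (X + Y) = lyap B X + lyap B Y" for X Y
    unfolding lyap_def using suminf_add[OF assms assms]
    by (simp add: linear_add[OF sandwich_linear])
  show "lyap B (r *\<^sub>R X) = r *\<^sub>R lyap B X" for r X
    unfolding lyap_def using suminf_scaleR_right[OF assms]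
    by (simp add: linear_scale[OF sandwich_linear])
qed

lemma lyap_iteration_tendsto:
  fixes B :: "real^'n^'n"
  assumes summable: "\<And>U. summable (\<lambda>j. sandwich (matpow B j) U)"
    and step: "\<And>k. E (Suc k) = c + sandwich B (E k)"
  shows "E \<longlonglongrightarrow> lyap B c"
proof -
  have sandwich_linear: "linear (sandwich B)"
    using bounded_linear_sandwich bounded_linear.linear by blast
  have closed_form: "E k = sandwich (matpow B k) (E 0) + (\<Sum>j<k. sandwich (matpow B j) c)" for k
  proof (induction k)
    case (Suc k)
    then have "E (Suc k) = c + (sandwich (matpow B (Suc k)) (E 0) + (\<Sum>j<k. sandwich (matpow B (Suc j)) c))"
      by (simp only: step sandwich_matpow_Suc linear_add[OF sandwich_linear] linear_sum[OF sandwich_linear])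
    then show ?case
      by (simp only: sum.lessThan_Suc_shift matpow.simps(1) matrix_mul_lid matrix_mul_rid transpose_mat
          add.assoc) (rule add.left_commute)
  qed simp
  have "(\<lambda>k. sandwich (matpow B k) (E 0) + (\<Sum>j<k. sandwich (matpow B j) c)) \<longlonglongrightarrow> 0 + lyap B c"
    unfolding lyap_def by (intro tendsto_add summable_LIMSEQ_zero summable_LIMSEQ summable)
  then show ?thesis
    unfolding closed_form[symmetric] by simp
qed

section \<open>Expectations of products of independent variables\<close>

lemma (in prob_space)
  fixes f :: "'c \<Rightarrow> real" and g :: "'c \<Rightarrow> 'b::euclidean_space"
  assumes indep: "indep_var N1 X N2 Y"
    and f: "f \<in> borel_measurable N1" and g: "g \<in> borel_measurable N2"
    and int_f: "integrable M (\<lambda>\<omega>. f (X \<omega>))" and int_g: "integrable M (\<lambda>\<omega>. g (Y \<omega>))"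
  shows indep_var_integrable_scaleR: "integrable M (\<lambda>\<omega>. f (X \<omega>) *\<^sub>R g (Y \<omega>))"
    and indep_var_integral_scaleR:
      "(\<integral>\<omega>. f (X \<omega>) *\<^sub>R g (Y \<omega>) \<partial>M) = (\<integral>\<omega>. f (X \<omega>) \<partial>M) *\<^sub>R (\<integral>\<omega>. g (Y \<omega>) \<partial>M)"
proof -
  \<comment> \<open>\<open>indep_var\<close> needs both variables in one type, so the real-valued
    library result is applied to each coordinate of \<open>g\<close>.\<close>
  have indep_component: "indep_var borel (\<lambda>\<omega>. f (X \<omega>)) borel (\<lambda>\<omega>. g (Y \<omega>) \<bullet> b)" for b
    using indep_var_compose[OF indep f, of "\<lambda>y. g y \<bullet> b"] g by (simp add: comp_def)
  have int_component: "integrable M (\<lambda>\<omega>. g (Y \<omega>) \<bullet> b)" for b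
    using int_g by (rule integrable_inner_left)
  have componentwise: "(\<lambda>\<omega>. f (X \<omega>) *\<^sub>R g (Y \<omega>)) = (\<lambda>\<omega>. \<Sum>b\<in>Basis. (f (X \<omega>) * (g (Y \<omega>) \<bullet> b)) *\<^sub>R b)"
  proof
    fix \<omega>
    show "f (X \<omega>) *\<^sub>R g (Y \<omega>) = (\<Sum>b\<in>Basis. (f (X \<omega>) * (g (Y \<omega>) \<bullet> b)) *\<^sub>R b)"
      by (subst (1) euclidean_representation[symmetric, of "g (Y \<omega>)"])
        (simp only: scaleR_sum_right scaleR_scaleR)
  qed
  show int: "integrable M (\<lambda>\<omega>. f (X \<omega>) *\<^sub>R g (Y \<omega>))"
    unfolding componentwise
    by (intro Bochner_Integration.integrable_sum integrable_scaleR_left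
        indep_var_integrable[OF indep_component int_f int_component])
  show "(\<integral>\<omega>. f (X \<omega>) *\<^sub>R g (Y \<omega>) \<partial>M) = (\<integral>\<omega>. f (X \<omega>) \<partial>M) *\<^sub>R (\<integral>\<omega>. g (Y \<omega>) \<partial>M)"
  proof (rule euclidean_eqI)
    fix b :: 'b
    have "(\<integral>\<omega>. f (X \<omega>) *\<^sub>R g (Y \<omega>) \<partial>M) \<bullet> b = (\<integral>\<omega>. f (X \<omega>) * (g (Y \<omega>) \<bullet> b) \<partial>M)"
      using integral_inner_left[OF int, of b] by simp
    also have "\<dots> = (\<integral>\<omega>. f (X \<omega>) \<partial>M) * ((\<integral>\<omega>. g (Y \<omega>) \<partial>M) \<bullet> b)"
      using indep_var_lebesgue_integral[OF indep_component int_f int_component]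
        integral_inner_left[OF int_g] by simp
    finally show "(\<integral>\<omega>. f (X \<omega>) *\<^sub>R g (Y \<omega>) \<partial>M) \<bullet> b
        = ((\<integral>\<omega>. f (X \<omega>) \<partial>M) *\<^sub>R (\<integral>\<omega>. g (Y \<omega>) \<partial>M)) \<bullet> b"
      by simp
  qed
qed

lemma (in prob_space)
  assumes S: "{\<omega> \<in> space M. P \<omega>} \<in> events"
  shows integrable_of_bool_scaleR: "integrable M (\<lambda>\<omega>. of_bool (P \<omega>) *\<^sub>R c)"
    and integral_of_bool_scaleR: "(\<integral>\<omega>. of_bool (P \<omega>) *\<^sub>R c \<partial>M) = prob {\<omega> \<in> space M. P \<omega>} *\<^sub>R c"
proof -
  let ?S = "{\<omega> \<in> space M. P \<omega>}"
  have int_indicator: "integrable M (indicator ?S :: 'a \<Rightarrow> real)"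
    using S by (intro integrable_real_indicator) (simp_all add: less_top[symmetric])
  have on_space: "of_bool (P \<omega>) *\<^sub>R c = indicator ?S \<omega> *\<^sub>R c" if "\<omega> \<in> space M" for \<omega>
    using that by (simp add: indicator_def)
  have "integrable M (\<lambda>\<omega>. indicator ?S \<omega> *\<^sub>R c)"
    using int_indicator by simp
  then show "integrable M (\<lambda>\<omega>. of_bool (P \<omega>) *\<^sub>R c)"
    by (rule Bochner_Integration.integrable_cong[THEN iffD2, OF refl, rotated]) (rule on_space)
  have "(\<integral>\<omega>. of_bool (P \<omega>) *\<^sub>R c \<partial>M) = (\<integral>\<omega>. indicator ?S \<omega> *\<^sub>R c \<partial>M)"
    by (rule Bochner_Integration.integral_cong) (simp_all add: on_space)
  also have "\<dots> = prob ?S *\<^sub>R c"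
    using int_indicator S by (simp add: Int_absorb2 sets.sets_into_space)
  finally show "(\<integral>\<omega>. of_bool (P \<omega>) *\<^sub>R c \<partial>M) = prob ?S *\<^sub>R c" .
qed

lemma (in prob_space) prob_eq_1_of_binary:
  assumes "X \<in> measurable M (count_space UNIV)" "\<And>\<omega>. \<omega> \<in> space M \<Longrightarrow> X \<omega> \<in> {0, 1 :: nat}"
  shows "prob {\<omega> \<in> space M. X \<omega> = 1} = 1 - prob {\<omega> \<in> space M. X \<omega> = 0}"
proof -
  have "{\<omega> \<in> space M. X \<omega> = 1} = space M - {\<omega> \<in> space M. X \<omega> = 0}"
    by (force dest: assms(2))
  moreover have "{\<omega> \<in> space M. X \<omega> = 0} \<in> events"
    using assms(1) by measurable
  ultimately show ?thesis by (simp add: prob_compl)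
qed

section \<open>The eavesdropper recursion\<close>

definition packet_indices :: "nat \<Rightarrow> (nat + nat) set" where
  "packet_indices k = Inl ` {1..k} \<union> Inr ` {1..k}"

lemma eav_cov_cong:
  assumes "\<And>j. 1 \<le> j \<Longrightarrow> j \<le> k \<Longrightarrow> lam j = lam' j \<and> u j = u' j"
  shows "eav_cov A Q Pb Pn P0 lam u k = eav_cov A Q Pb Pn P0 lam' u' k"
  using assms by (induction k) auto

lemma finite_values_eav_cov: "finite {eav_cov A Q Pb Pn P0 lam u k | lam u. True}"
proof (induction k)
  case (Suc k)
  have "{eav_cov A Q Pb Pn P0 lam u (Suc k) | lam u. True}
      \<subseteq> {Pb, Pn} \<union> (\<lambda>X. sandwich A X + Q) ` {eav_cov A Q Pb Pn P0 lam u k | lam u. True}"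
    by auto
  then show ?case
    by (rule finite_subset) (intro finite_UnI finite_imageI Suc.IH finite.intros)
qed simp

lemma bounded_eav_cov:
  obtains b where "\<And>lam u. norm (eav_cov A Q Pb Pn P0 lam u k) \<le> b"
proof -
  have "bounded {eav_cov A Q Pb Pn P0 lam u k | lam u. True}"
    by (rule finite_imp_bounded[OF finite_values_eav_cov])
  then obtain b where "\<forall>X \<in> {eav_cov A Q Pb Pn P0 lam u k | lam u. True}. norm X \<le> b"
    by (auto simp: bounded_iff)
  then show ?thesis by (intro that) auto
qed

lemma borel_measurable_sandwich_add: "(\<lambda>X. sandwich A X + Q) \<in> borel_measurable borel"
  by (intro borel_measurable_continuous_onI continuous_intros linear_continuous_on
      bounded_linear_sandwich)

lemma measurable_eav_cov_packets:
  assumes "packet_indices k \<subseteq> L"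
  shows "(\<lambda>h. eav_cov A Q Pb Pn P0 (\<lambda>j. h (Inl j)) (\<lambda>j. h (Inr j)) k)
           \<in> borel_measurable (PiM L (\<lambda>_. count_space UNIV))"
  using assms
proof (induction k)
  case (Suc k)
  then have "Inl (Suc k) \<in> L" "Inr (Suc k) \<in> L" "packet_indices k \<subseteq> L"
    by (auto simp: packet_indices_def)
  have component: "(\<lambda>h. h i) \<in> measurable (PiM L (\<lambda>_. count_space UNIV)) (count_space UNIV)"
    if "i \<in> L" for i
    using that by (rule measurable_component_singleton)
  \<comment> \<open>An opaque \<open>G\<close>, so that the measurability prover does not unfold the matrix products.\<close>
  define G where "G X = sandwich A X + Q" for X
  have "G \<in> borel_measurable borel"
    unfolding G_def by (rule borel_measurable_sandwich_add)
  note [measurable] = this Suc.IH[OF \<open>packet_indices k \<subseteq> L\<close>]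
    component[OF \<open>Inl (Suc k) \<in> L\<close>] component[OF \<open>Inr (Suc k) \<in> L\<close>]
  have step: "(\<lambda>h. eav_cov A Q Pb Pn P0 (\<lambda>j. h (Inl j)) (\<lambda>j. h (Inr j)) (Suc k))
      = (\<lambda>h. if h (Inl (Suc k)) = 1 \<and> h (Inr (Suc k)) = 1 then Pb
             else if h (Inl (Suc k)) = 1 \<and> h (Inr (Suc k)) = 0 then Pn
             else G (eav_cov A Q Pb Pn P0 (\<lambda>j. h (Inl j)) (\<lambda>j. h (Inr j)) k))"
    unfolding G_def by simp
  show ?case unfolding step by measurable
qed simp

(* The two packet processes are indexed jointly by nat + nat (Inl k for lam k, Inr k for u k),
   so that their mutual independence is a single indep_vars statement. *)
abbreviation packet_index_set :: "(nat + nat) set" where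
  "packet_index_set \<equiv> {Inl k | k. k \<ge> 1} \<union> {Inr k | k. k \<ge> 1}"

locale eavesdropper_channel = prob_space M
  for M :: "'a measure" and lam u :: "nat \<Rightarrow> 'a \<Rightarrow> nat" and \<gamma> \<mu> :: real +
  assumes lam_measurable: "\<And>k. k \<ge> 1 \<Longrightarrow> lam k \<in> measurable M (count_space UNIV)"
    and u_measurable: "\<And>k. k \<ge> 1 \<Longrightarrow> u k \<in> measurable M (count_space UNIV)"
    and lam_binary: "\<And>k \<omega>. k \<ge> 1 \<Longrightarrow> \<omega> \<in> space M \<Longrightarrow> lam k \<omega> \<in> {0, 1}"
    and u_binary: "\<And>k \<omega>. k \<ge> 1 \<Longrightarrow> \<omega> \<in> space M \<Longrightarrow> u k \<omega> \<in> {0, 1}"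
    and prob_lam_0: "\<And>k. k \<ge> 1 \<Longrightarrow> prob {\<omega> \<in> space M. lam k \<omega> = 0} = \<gamma>"
    and prob_u_0: "\<And>k. k \<ge> 1 \<Longrightarrow> prob {\<omega> \<in> space M. u k \<omega> = 0} = \<mu>"
    and indep_packets: "indep_vars (\<lambda>_. count_space UNIV) (case_sum lam u) packet_index_set"
begin

definition packets :: "(nat + nat) set \<Rightarrow> 'a \<Rightarrow> nat + nat \<Rightarrow> nat" where
  "packets J \<omega> = restrict (\<lambda>i. case_sum lam u i \<omega>) J"

lemma measurable_packets:
  assumes "J \<subseteq> packet_index_set"
  shows "packets J \<in> measurable M (PiM J (\<lambda>_. count_space UNIV))"
  unfolding packets_def
  using assms lam_measurable u_measurable by (intro measurable_restrict) auto

lemma indep_packets_disjoint: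
  assumes "J \<inter> K = {}"
    and "J \<subseteq> packet_index_set" "K \<subseteq> packet_index_set"
  shows "indep_var (PiM J (\<lambda>_. count_space UNIV)) (packets J) (PiM K (\<lambda>_. count_space UNIV)) (packets K)"
  unfolding packets_def using indep_var_restrict[OF indep_packets assms] .

lemma packet_indices_subset: "packet_indices k \<subseteq> packet_index_set"
  by (auto simp: packet_indices_def)

lemma eav_cov_packets:
  "eav_cov A Q Pb Pn P0 (\<lambda>j. lam j \<omega>) (\<lambda>j. u j \<omega>) k
     = eav_cov A Q Pb Pn P0 (\<lambda>j. packets (packet_indices k) \<omega> (Inl j))
         (\<lambda>j. packets (packet_indices k) \<omega> (Inr j)) k"
  by (rule eav_cov_cong) (auto simp: packets_def packet_indices_def)

lemma prob_received_u:
  assumes "k \<ge> 1"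
  shows "prob {\<omega> \<in> space M. lam k \<omega> = 1 \<and> u k \<omega> = v}
           = (1 - \<gamma>) * prob {\<omega> \<in> space M. u k \<omega> = v}"
proof -
  define S where "S i = (case i of Inl _ \<Rightarrow> {1} | Inr _ \<Rightarrow> {v})" for i :: "nat + nat"
  have "prob (\<Inter>i\<in>{Inl k, Inr k}. case_sum lam u i -` S i \<inter> space M)
      = (\<Prod>i\<in>{Inl k, Inr k}. prob (case_sum lam u i -` S i \<inter> space M))"
    using assms by (intro indep_varsD[OF indep_packets]) auto
  also have "(\<Inter>i\<in>{Inl k, Inr k}. case_sum lam u i -` S i \<inter> space M)
      = {\<omega> \<in> space M. lam k \<omega> = 1 \<and> u k \<omega> = v}"
    by (auto simp: S_def)
  also have "(\<Prod>i\<in>{Inl k, Inr k}. prob (case_sum lam u i -` S i \<inter> space M))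
      = prob (lam k -` {1} \<inter> space M) * prob (u k -` {v} \<inter> space M)"
    by (simp add: S_def)
  also have "lam k -` {1} \<inter> space M = {\<omega> \<in> space M. lam k \<omega> = 1}"
    by auto
  also have "prob \<dots> = 1 - \<gamma>"
    using prob_eq_1_of_binary[OF lam_measurable[OF assms] lam_binary[OF assms]] prob_lam_0[OF assms]
    by simp
  also have "u k -` {v} \<inter> space M = {\<omega> \<in> space M. u k \<omega> = v}"
    by auto
  finally show ?thesis .
qed

lemma
  fixes g :: "(nat + nat \<Rightarrow> nat) \<Rightarrow> 'b::euclidean_space"
  assumes g: "g \<in> borel_measurable (PiM (packet_indices k) (\<lambda>_. count_space UNIV))"
    and int_g: "integrable M (\<lambda>\<omega>. g (packets (packet_indices k) \<omega>))"
  shows integrable_lost_scaleR: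
      "integrable M (\<lambda>\<omega>. of_bool (lam (Suc k) \<omega> = 0) *\<^sub>R g (packets (packet_indices k) \<omega>))"
    and integral_lost_scaleR:
      "(\<integral>\<omega>. of_bool (lam (Suc k) \<omega> = 0) *\<^sub>R g (packets (packet_indices k) \<omega>) \<partial>M)
         = \<gamma> *\<^sub>R (\<integral>\<omega>. g (packets (packet_indices k) \<omega>) \<partial>M)"
proof -
  let ?J = "{Inl (Suc k)}" and ?K = "packet_indices k"
  define f :: "(nat + nat \<Rightarrow> nat) \<Rightarrow> real" where "f h = of_bool (h (Inl (Suc k)) = 0)" for h
  have indep: "indep_var (PiM ?J (\<lambda>_. count_space UNIV)) (packets ?J)
      (PiM ?K (\<lambda>_. count_space UNIV)) (packets ?K)"
    by (rule indep_packets_disjoint) (auto simp: packet_indices_def)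
  have f_measurable: "f \<in> borel_measurable (PiM ?J (\<lambda>_. count_space UNIV))"
    unfolding f_def by measurable
  have f_packets: "f (packets ?J \<omega>) = of_bool (lam (Suc k) \<omega> = 0)" for \<omega>
    by (simp add: f_def packets_def)
  have lost_event: "{\<omega> \<in> space M. lam (Suc k) \<omega> = 0} \<in> events"
    using lam_measurable[of "Suc k"] by measurable
  have int_f: "integrable M (\<lambda>\<omega>. f (packets ?J \<omega>))"
    using integrable_of_bool_scaleR[OF lost_event, of "1::real"] by (simp add: f_packets real_scaleR_def)
  have "integrable M (\<lambda>\<omega>. f (packets ?J \<omega>) *\<^sub>R g (packets ?K \<omega>))"
    by (rule indep_var_integrable_scaleR[OF indep f_measurable g]) (rule int_f, rule int_g)
  then show "integrable M (\<lambda>\<omega>. of_bool (lam (Suc k) \<omega> = 0) *\<^sub>R g (packets ?K \<omega>))"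
    by (simp add: f_packets)
  have "(\<integral>\<omega>. f (packets ?J \<omega>) *\<^sub>R g (packets ?K \<omega>) \<partial>M)
      = (\<integral>\<omega>. f (packets ?J \<omega>) \<partial>M) *\<^sub>R (\<integral>\<omega>. g (packets ?K \<omega>) \<partial>M)"
    by (rule indep_var_integral_scaleR[OF indep f_measurable g]) (rule int_f, rule int_g)
  also have "(\<integral>\<omega>. f (packets ?J \<omega>) \<partial>M) = \<gamma>"
    using integral_of_bool_scaleR[OF lost_event, of "1::real"] prob_lam_0[of "Suc k"]
    by (simp add: f_packets real_scaleR_def)
  finally show "(\<integral>\<omega>. of_bool (lam (Suc k) \<omega> = 0) *\<^sub>R g (packets ?K \<omega>) \<partial>M)
      = \<gamma> *\<^sub>R (\<integral>\<omega>. g (packets ?K \<omega>) \<partial>M)"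
    by (simp add: f_packets)
qed

context
  fixes A Q Pb Pn P0 :: "real^'n^'n"
begin

abbreviation eav_process :: "nat \<Rightarrow> 'a \<Rightarrow> real^'n^'n" where
  "eav_process k \<omega> \<equiv> eav_cov A Q Pb Pn P0 (\<lambda>j. lam j \<omega>) (\<lambda>j. u j \<omega>) k"

lemma integrable_eav_process: "integrable M (eav_process k)"
proof -
  obtain b where b: "\<And>lam u. norm (eav_cov A Q Pb Pn P0 lam u k) \<le> b"
    using bounded_eav_cov by blast
  have "eav_process k \<in> borel_measurable M"
    unfolding eav_cov_packets
    by (rule measurable_compose[OF measurable_packets[OF packet_indices_subset]
          measurable_eav_cov_packets[OF subset_refl]])
  then show ?thesis
    using b by (intro integrable_const_bound[where B = b]) auto
qed

(* P_k is a function of the first k packets, and the loss of packet k + 1 is independent of them. *)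
lemma
  shows integrable_lost_eav_process:
      "integrable M (\<lambda>\<omega>. of_bool (lam (Suc k) \<omega> = 0) *\<^sub>R (sandwich A (eav_process k \<omega>) + Q))"
    and integral_lost_eav_process:
      "(\<integral>\<omega>. of_bool (lam (Suc k) \<omega> = 0) *\<^sub>R (sandwich A (eav_process k \<omega>) + Q) \<partial>M)
         = \<gamma> *\<^sub>R (sandwich A (\<integral>\<omega>. eav_process k \<omega> \<partial>M) + Q)"
proof -
  define g where "g h = sandwich A (eav_cov A Q Pb Pn P0 (\<lambda>j. h (Inl j)) (\<lambda>j. h (Inr j)) k) + Q" for h
  have g_measurable: "g \<in> borel_measurable (PiM (packet_indices k) (\<lambda>_. count_space UNIV))"
    unfolding g_def
    by (rule measurable_compose[OF measurable_eav_cov_packets[OF subset_refl]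
          borel_measurable_sandwich_add])
  have g_packets: "g (packets (packet_indices k) \<omega>) = sandwich A (eav_process k \<omega>) + Q" for \<omega>
    by (simp add: g_def eav_cov_packets)
  have int_g: "integrable M (\<lambda>\<omega>. g (packets (packet_indices k) \<omega>))"
    unfolding g_packets
    by (intro Bochner_Integration.integrable_add integrable_bounded_linear[OF bounded_linear_sandwich]
        integrable_eav_process integrable_const)
  show "integrable M (\<lambda>\<omega>. of_bool (lam (Suc k) \<omega> = 0) *\<^sub>R (sandwich A (eav_process k \<omega>) + Q))"
    using integrable_lost_scaleR[OF g_measurable int_g] by (simp add: g_packets)
  have "(\<integral>\<omega>. g (packets (packet_indices k) \<omega>) \<partial>M) = sandwich A (\<integral>\<omega>. eav_process k \<omega> \<partial>M) + Q"
    unfolding g_packets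
    using integral_bounded_linear[OF bounded_linear_sandwich integrable_eav_process]
    by (simp add: integrable_bounded_linear[OF bounded_linear_sandwich integrable_eav_process] prob_space)
  then show "(\<integral>\<omega>. of_bool (lam (Suc k) \<omega> = 0) *\<^sub>R (sandwich A (eav_process k \<omega>) + Q) \<partial>M)
      = \<gamma> *\<^sub>R (sandwich A (\<integral>\<omega>. eav_process k \<omega> \<partial>M) + Q)"
    using integral_lost_scaleR[OF g_measurable int_g] by (simp add: g_packets)
qed

lemma integral_eav_process_Suc:
  "(\<integral>\<omega>. eav_process (Suc k) \<omega> \<partial>M)
     = ((1 - \<gamma>) * (1 - \<mu>)) *\<^sub>R Pb + ((1 - \<gamma>) * \<mu>) *\<^sub>R Pn
       + \<gamma> *\<^sub>R (sandwich A (\<integral>\<omega>. eav_process k \<omega> \<partial>M) + Q)"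
proof -
  let ?clean = "\<lambda>\<omega>. lam (Suc k) \<omega> = 1 \<and> u (Suc k) \<omega> = 1"
    and ?noise = "\<lambda>\<omega>. lam (Suc k) \<omega> = 1 \<and> u (Suc k) \<omega> = 0"
    and ?lost = "\<lambda>\<omega>. lam (Suc k) \<omega> = 0"
  have clean_event: "{\<omega> \<in> space M. ?clean \<omega>} \<in> events"
    and noise_event: "{\<omega> \<in> space M. ?noise \<omega>} \<in> events"
    using lam_measurable[of "Suc k"] u_measurable[of "Suc k"] by measurable
  have "prob {\<omega> \<in> space M. u (Suc k) \<omega> = 1} = 1 - \<mu>"
    using prob_eq_1_of_binary[OF u_measurable u_binary] prob_u_0 by simp
  then have prob_clean: "prob {\<omega> \<in> space M. ?clean \<omega>} = (1 - \<gamma>) * (1 - \<mu>)"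
    and prob_noise: "prob {\<omega> \<in> space M. ?noise \<omega>} = (1 - \<gamma>) * \<mu>"
    using prob_received_u[of "Suc k"] prob_u_0[of "Suc k"] by simp_all
  have "eav_process (Suc k) \<omega> = of_bool (?clean \<omega>) *\<^sub>R Pb + of_bool (?noise \<omega>) *\<^sub>R Pn
      + of_bool (?lost \<omega>) *\<^sub>R (sandwich A (eav_process k \<omega>) + Q)" if "\<omega> \<in> space M" for \<omega>
    using lam_binary[of "Suc k" \<omega>] u_binary[of "Suc k" \<omega>] that by auto
  then have "(\<integral>\<omega>. eav_process (Suc k) \<omega> \<partial>M) = (\<integral>\<omega>. of_bool (?clean \<omega>) *\<^sub>R Pb
      + of_bool (?noise \<omega>) *\<^sub>R Pn + of_bool (?lost \<omega>) *\<^sub>R (sandwich A (eav_process k \<omega>) + Q) \<partial>M)"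
    by (intro Bochner_Integration.integral_cong) auto
  also have "\<dots> = (\<integral>\<omega>. of_bool (?clean \<omega>) *\<^sub>R Pb \<partial>M) + (\<integral>\<omega>. of_bool (?noise \<omega>) *\<^sub>R Pn \<partial>M)
      + (\<integral>\<omega>. of_bool (?lost \<omega>) *\<^sub>R (sandwich A (eav_process k \<omega>) + Q) \<partial>M)"
    using integrable_of_bool_scaleR[OF clean_event, of Pb] integrable_of_bool_scaleR[OF noise_event, of Pn]
      integrable_lost_eav_process[of k]
    by (simp only: Bochner_Integration.integral_add Bochner_Integration.integrable_add)
  also have "\<dots> = ((1 - \<gamma>) * (1 - \<mu>)) *\<^sub>R Pb + ((1 - \<gamma>) * \<mu>) *\<^sub>R Pn
      + \<gamma> *\<^sub>R (sandwich A (\<integral>\<omega>. eav_process k \<omega> \<partial>M) + Q)"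
    by (simp only: integral_of_bool_scaleR[OF clean_event] integral_of_bool_scaleR[OF noise_event]
        integral_lost_eav_process prob_clean prob_noise)
  finally show ?thesis .
qed

end

end

theorem lemma3:
  fixes A Q Pbar P0 :: "real^'n^'n"
    and C :: "real^'n^'m"
    and R :: "real^'m^'m"
    and \<gamma> \<mu> :: real
    and M :: "'a measure"
    and lam u :: "nat \<Rightarrow> 'a \<Rightarrow> nat"
  assumes rho: "spectral_radius A < 1"
    and Q_pd: "pos_def Q" and R_pd: "pos_def R"
    and obs: "observable A C"
    and ctrb: "controllable A (mat_sqrt Q)"
    and Pbar_pd: "pos_def Pbar"
    and Pbar_dare: "Pbar = riccati A C Q R Pbar"
    and Pbar_stab: "spectral_radius (A ** (mat 1 - kgain A C Q R Pbar ** C)) < 1"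
    and \<gamma>: "0 < \<gamma>" "\<gamma> < 1"
    and \<mu>: "0 < \<mu>" "\<mu> < 1"
    and P: "prob_space M"
    and lam_rv: "\<And>k. k \<ge> 1 \<Longrightarrow> lam k \<in> measurable M (count_space UNIV)"
    and u_rv: "\<And>k. k \<ge> 1 \<Longrightarrow> u k \<in> measurable M (count_space UNIV)"
    and lam_val: "\<And>k \<omega>. k \<ge> 1 \<Longrightarrow> \<omega> \<in> space M \<Longrightarrow> lam k \<omega> \<in> {0, 1}"
    and u_val: "\<And>k \<omega>. k \<ge> 1 \<Longrightarrow> \<omega> \<in> space M \<Longrightarrow> u k \<omega> \<in> {0, 1}"
    and lam_dist: "\<And>k. k \<ge> 1 \<Longrightarrow> measure M {\<omega> \<in> space M. lam k \<omega> = 0} = \<gamma>"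
    and u_dist: "\<And>k. k \<ge> 1 \<Longrightarrow> measure M {\<omega> \<in> space M. u k \<omega> = 0} = \<mu>"
    and indep: "prob_space.indep_vars M (\<lambda>_. count_space UNIV)
                  (\<lambda>i. case i of Inl k \<Rightarrow> lam k | Inr k \<Rightarrow> u k)
                  ({Inl k | k. k \<ge> 1} \<union> {Inr k | k. k \<ge> 1})"
    and P0_psd: "pos_semidef P0"
  shows "(\<lambda>k. integral\<^sup>L M (\<lambda>\<omega>. eav_cov A Q Pbar (lyap A Q + Pbar) P0
                   (\<lambda>j. lam j \<omega>) (\<lambda>j. u j \<omega>) k))
         \<longlonglongrightarrow> ((1 - \<gamma>) * (1 - \<mu>)) *\<^sub>R lyap (sqrt \<gamma> *\<^sub>R A) Pbar
             + \<gamma> *\<^sub>R lyap (sqrt \<gamma> *\<^sub>R A) Q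
             + ((1 - \<gamma>) * \<mu>) *\<^sub>R lyap (sqrt \<gamma> *\<^sub>R A) (lyap A Q + Pbar)"
proof -
  interpret eavesdropper_channel M lam u \<gamma> \<mu>
    using P lam_rv u_rv lam_val u_val lam_dist u_dist indep
    by (simp add: eavesdropper_channel_def eavesdropper_channel_axioms_def)
  obtain b where bound: "\<And>k. norm (matpow A k) \<le> b"
    using bounded_matpow[OF rho] by blast
  define B where "B = sqrt \<gamma> *\<^sub>R A"
  define Pn where "Pn = lyap A Q + Pbar"
  define c where "c = ((1 - \<gamma>) * (1 - \<mu>)) *\<^sub>R Pbar + \<gamma> *\<^sub>R Q + ((1 - \<gamma>) * \<mu>) *\<^sub>R Pn"
  have summable: "summable (\<lambda>j. sandwich (matpow B j) U)" for U
    unfolding B_def using \<gamma> by (intro summable_lyap_series[OF bound]) simp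
  have "(\<lambda>k. \<integral>\<omega>. eav_cov A Q Pbar Pn P0 (\<lambda>j. lam j \<omega>) (\<lambda>j. u j \<omega>) k \<partial>M) \<longlonglongrightarrow> lyap B c"
  proof (rule lyap_iteration_tendsto[OF summable])
    show "(\<integral>\<omega>. eav_cov A Q Pbar Pn P0 (\<lambda>j. lam j \<omega>) (\<lambda>j. u j \<omega>) (Suc k) \<partial>M)
        = c + sandwich B (\<integral>\<omega>. eav_cov A Q Pbar Pn P0 (\<lambda>j. lam j \<omega>) (\<lambda>j. u j \<omega>) k \<partial>M)" for k
      using \<gamma> unfolding integral_eav_process_Suc B_def c_def
      by (simp add: sandwich_scaleR algebra_simps)
  qed
  also have "lyap B c = ((1 - \<gamma>) * (1 - \<mu>)) *\<^sub>R lyap B Pbar + \<gamma> *\<^sub>R lyap B Q + ((1 - \<gamma>) * \<mu>) *\<^sub>R lyap B Pn"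
    unfolding c_def using linear_lyap[OF summable] by (simp add: linear_add linear_scale)
  finally show ?thesis
    unfolding B_def Pn_def .
qed

end
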